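(* Let $k \ge 1$ be an integer, let $H$ be a graph, and let $x_1,\dots,x_k,y_1,\dots,y_k$ be $2k$ distinct vertices of $H$ such that $Z = \{x_1,\dots,x_k,y_1,\dots,y_k\}$ is an independent set of $H$. If $\tau(H) \ge 2k-1$, then $H$ contains a matching $\{m_1,\dots,m_k\}$ of size $k$ such that $m_i \cap \{x_j,y_j\} = \emptyset$ for all $i \neq j$.
   Context: All graphs are finite and simple. $\tau(H)$ denotes the vertex cover number of $H$ (minimum size of a vertex set meeting every edge of $H$). Edges are regarded as 2-element vertex sets. *)

theory Defs
  imports Main
begin

definition simple_graph :: "'a set \<Rightarrow> 'a set set \<Rightarrow> bool" where
  "simple_graph V E \<longleftrightarrow> finite V \<and> (\<forall>e\<in>E. e \<subseteq> V \<and> card e = 2)"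

definition vertex_cover :: "'a set \<Rightarrow> 'a set set \<Rightarrow> 'a set \<Rightarrow> bool" where
  "vertex_cover V E C \<longleftrightarrow> C \<subseteq> V \<and> (\<forall>e\<in>E. e \<inter> C \<noteq> {})"

definition tau :: "'a set \<Rightarrow> 'a set set \<Rightarrow> nat" where
  "tau V E = Min (card ` {C. vertex_cover V E C})"

definition independent_set :: "'a set set \<Rightarrow> 'a set \<Rightarrow> bool" where
  "independent_set E Z \<longleftrightarrow> (\<forall>e\<in>E. \<not> e \<subseteq> Z)"

end

theory Submission
  imports Defs
begin

text \<open>
  Let \<open>M\<close> be a maximal matching among the edges avoiding the terminals \<open>Z\<close>, and call a
  vertex free if it lies neither in \<open>Z\<close> nor on \<open>M\<close>. As \<open>Z\<close> is independent, every edge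
  meets \<open>M\<close> or joins a terminal to a free vertex. Hence for every set \<open>S\<close> of pairs, the
  vertices of \<open>M\<close>, the free neighbours \<open>N(S)\<close> of the pairs in \<open>S\<close> and the terminals of
  the other pairs form a vertex cover: \<open>\<tau>(H) \<le> 2|M| + |N(S)| + 2(k - |S|)\<close>. For \<open>S\<close> of
  maximal deficiency \<open>|S| - |N(S)|\<close>, Hall's theorem matches all but \<open>|S| - |N(S)|\<close> pairs
  to distinct free neighbours, and \<open>\<tau>(H) \<ge> 2k - 1\<close> forces \<open>|S| - |N(S)| \<le> |M|\<close>; the
  remaining pairs receive distinct edges of \<open>M\<close>.
\<close>

lemma inj_on_glue_representatives:
  assumes "T \<subseteq> X"
    and "inj_on f T" "\<forall>x\<in>T. f x \<in> N x" "f ` T \<subseteq> U"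
    and "inj_on g (X - T)" "\<forall>x\<in>X - T. g x \<in> N x - U"
  shows "\<exists>h. inj_on h X \<and> (\<forall>x\<in>X. h x \<in> N x)"
proof -
  define h where "h x = (if x \<in> T then f x else g x)" for x
  have "inj_on h T" using assms(2) by (simp add: h_def inj_on_def)
  moreover have "inj_on h (X - T)" using assms(5) by (simp add: h_def inj_on_def)
  moreover have "h ` (T - (X - T)) \<inter> h ` ((X - T) - T) = {}"
    using assms(4,6) by (auto simp: h_def)
  ultimately have "inj_on h (T \<union> (X - T))" by (simp only: inj_on_Un)
  moreover have "T \<union> (X - T) = X" using assms(1) by blast
  ultimately show ?thesis using assms(3,6) by (auto simp: h_def)
qed

lemma hall_condition_outside_critical:
  assumes "finite X" and hall: "\<forall>T\<subseteq>X. card T \<le> card (\<Union>(N ` T))"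
    and "T \<subseteq> X" and critical: "card (\<Union>(N ` T)) \<le> card T"
  shows "\<forall>T'\<subseteq>X - T. card T' \<le> card (\<Union>x\<in>T'. N x - \<Union>(N ` T))"
proof (intro allI impI)
  fix T' assume T': "T' \<subseteq> X - T"
  have "card T + card T' = card (T \<union> T')"
    using T' \<open>finite X\<close> \<open>T \<subseteq> X\<close> by (intro card_Un_disjoint[symmetric]) (auto intro: finite_subset)
  also have "\<dots> \<le> card (\<Union>(N ` (T \<union> T')))" using T' \<open>T \<subseteq> X\<close> by (intro hall[rule_format]) blast
  also have "\<Union>(N ` (T \<union> T')) = \<Union>(N ` T) \<union> (\<Union>x\<in>T'. N x - \<Union>(N ` T))" by blast
  also have "card \<dots> \<le> card (\<Union>(N ` T)) + card (\<Union>x\<in>T'. N x - \<Union>(N ` T))" by (rule card_Un_le)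
  finally show "card T' \<le> card (\<Union>x\<in>T'. N x - \<Union>(N ` T))" using critical by linarith
qed

lemma hall_condition_delete_representative:
  assumes "a \<in> X"
    and surplus: "\<forall>T\<subseteq>X. T \<noteq> {} \<longrightarrow> T \<noteq> X \<longrightarrow> card T < card (\<Union>(N ` T))"
  shows "\<forall>T\<subseteq>X - {a}. card T \<le> card (\<Union>x\<in>T. N x - {b})"
proof (intro allI impI)
  fix T assume T: "T \<subseteq> X - {a}"
  show "card T \<le> card (\<Union>x\<in>T. N x - {b})"
  proof (cases "T = {}")
    case False
    then have "card T < card (\<Union>(N ` T))" using surplus T \<open>a \<in> X\<close> by auto
    moreover have "(\<Union>x\<in>T. N x - {b}) = \<Union>(N ` T) - {b}" by blast
    moreover have "card (\<Union>(N ` T)) \<le> card (\<Union>(N ` T) - {b}) + 1"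
      by (cases "b \<in> \<Union>(N ` T)") (simp_all add: card_Diff_singleton_if)
    ultimately show ?thesis by (metis Suc_eq_plus1 less_Suc_eq_le order_less_le_trans)
  qed simp
qed

theorem hall_marriage:
  fixes N :: "'x \<Rightarrow> 'y set"
  assumes "finite X" "\<forall>x\<in>X. finite (N x)" "\<forall>T\<subseteq>X. card T \<le> card (\<Union>(N ` T))"
  shows "\<exists>f. inj_on f X \<and> (\<forall>x\<in>X. f x \<in> N x)"
  using assms
proof (induction "card X" arbitrary: X N rule: less_induct)
  case less
  have smaller: "card (X - T) < card X" if "T \<subseteq> X" "T \<noteq> {}" for T
    using less.prems(1) that by (intro psubset_card_mono) auto
  \<comment> \<open>Halmos--Vaughan: split at a proper critical subset, or else any choice for one \<open>x\<close> extends\<close>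
  consider "X = {}"
    | (critical) T where "T \<subseteq> X" "T \<noteq> {}" "T \<noteq> X" "card (\<Union>(N ` T)) \<le> card T"
    | (surplus) "X \<noteq> {}" "\<forall>T\<subseteq>X. T \<noteq> {} \<longrightarrow> T \<noteq> X \<longrightarrow> card T < card (\<Union>(N ` T))"
  proof (cases "\<exists>T\<subseteq>X. T \<noteq> {} \<and> T \<noteq> X \<and> card (\<Union>(N ` T)) \<le> card T")
    case True
    then show ?thesis using that(2) by blast
  next
    case False
    then have "\<forall>T\<subseteq>X. T \<noteq> {} \<longrightarrow> T \<noteq> X \<longrightarrow> card T < card (\<Union>(N ` T))"
      by (metis not_le)
    then show ?thesis using that(1,3) by blast
  qed
  then show ?case
  proof cases
    case critical
    have "finite T" using critical(1) less.prems(1) by (rule finite_subset)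
    have "card T < card X" using critical(1,3) less.prems(1) by (intro psubset_card_mono) auto
    obtain f where f: "inj_on f T" "\<forall>x\<in>T. f x \<in> N x"
      using less.hyps[OF \<open>card T < card X\<close> \<open>finite T\<close>, of N] critical(1) less.prems(2,3) by auto
    obtain g where g: "inj_on g (X - T)" "\<forall>x\<in>X - T. g x \<in> N x - \<Union>(N ` T)"
      using less.hyps[OF smaller[OF critical(1,2)], of "\<lambda>x. N x - \<Union>(N ` T)"] less.prems(1,2)
        hall_condition_outside_critical[OF less.prems(1,3) critical(1,4)] by auto
    have "f ` T \<subseteq> \<Union>(N ` T)" using f(2) by blast
    then show ?thesis by (rule inj_on_glue_representatives[OF critical(1) f _ g])
  next
    case surplus
    then obtain a where a: "a \<in> X" by blast
    then have "card {a} \<le> card (\<Union>(N ` {a}))" using less.prems(3) by blast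
    then obtain b where b: "b \<in> N a" by fastforce
    obtain g where g: "inj_on g (X - {a})" "\<forall>x\<in>X - {a}. g x \<in> N x - {b}"
      using less.hyps[OF smaller, of "{a}" "\<lambda>x. N x - {b}"] a less.prems(1,2)
        hall_condition_delete_representative[OF a surplus(2)] by auto
    show ?thesis by (rule inj_on_glue_representatives[of "{a}" X "\<lambda>_. b" N "{b}" g]) (use a b g in auto)
  qed simp
qed

lemma hall_marriage_with_defect:
  fixes N :: "'x \<Rightarrow> 'y set"
  assumes "finite X" "\<forall>x\<in>X. finite (N x)" "\<forall>T\<subseteq>X. card T \<le> card (\<Union>(N ` T)) + d"
  obtains D f where "D \<subseteq> X" "inj_on f D" "\<forall>x\<in>D. f x \<in> N x" "card X \<le> card D + d"
proof -
  define N' where "N' x = Inl ` N x \<union> Inr ` {..<d}" for x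
    \<comment> \<open>\<open>d\<close> dummy representatives shared by all \<open>x\<close> restore Hall's condition\<close>
  have "\<forall>T\<subseteq>X. card T \<le> card (\<Union>(N' ` T))"
  proof (intro allI impI)
    fix T assume T: "T \<subseteq> X"
    show "card T \<le> card (\<Union>(N' ` T))"
    proof (cases "T = {}")
      case False
      then have "\<Union>(N' ` T) = Inl ` \<Union>(N ` T) \<union> Inr ` {..<d}" by (auto simp: N'_def)
      moreover have "finite (\<Union>(N ` T))" using T assms(1,2) by (auto intro: finite_subset)
      ultimately have "card (\<Union>(N' ` T)) = card (\<Union>(N ` T)) + d"
        by (simp only:) (subst card_Un_disjoint, auto simp: card_image)
      then show ?thesis using assms(3) T by simp
    qed simp
  qed
  moreover have "\<forall>x\<in>X. finite (N' x)" using assms(2) by (simp add: N'_def)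
  ultimately obtain f' where f': "inj_on f' X" "\<forall>x\<in>X. f' x \<in> N' x"
    using hall_marriage[OF assms(1)] by blast
  define D where "D = {x\<in>X. f' x \<in> range Inl}"
  have "card (X - D) = card (f' ` (X - D))" using f'(1) by (simp add: card_image inj_on_diff)
  also have "\<dots> \<le> card (Inr ` {..<d} :: ('y + nat) set)"
    using f'(2) by (intro card_mono) (auto simp: D_def N'_def)
  finally have "card X \<le> card D + d"
    using assms(1) by (simp add: card_image card_Diff_subset D_def)
  moreover have "\<forall>x\<in>D. projl (f' x) \<in> N x" using f'(2) by (auto simp: D_def N'_def)
  moreover have "inj_on (projl \<circ> f') D" using f'(1) by (auto simp: D_def inj_on_def)
  ultimately show ?thesis using that[of D "projl \<circ> f'"] by (auto simp: D_def)
qed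

lemma hall_deficiency:
  fixes N :: "'x \<Rightarrow> 'y set"
  assumes "finite X" "\<forall>x\<in>X. finite (N x)"
  obtains S D f where "S \<subseteq> X" "D \<subseteq> X" "inj_on f D" "\<forall>x\<in>D. f x \<in> N x"
    "card X + card (\<Union>(N ` S)) \<le> card D + card S"
proof -
  define \<delta> where "\<delta> T = int (card T) - int (card (\<Union>(N ` T)))" for T
  have "finite (\<delta> ` Pow X)" using assms(1) by simp
  moreover have "Max (\<delta> ` Pow X) \<in> \<delta> ` Pow X" using calculation by (intro Max_in) auto
  ultimately obtain S where S: "S \<subseteq> X" "\<delta> S = Max (\<delta> ` Pow X)" by auto
  with \<open>finite (\<delta> ` Pow X)\<close> have S_max: "\<delta> T \<le> \<delta> S" if "T \<subseteq> X" for T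
    using that by simp
  define d where "d = nat (\<delta> S)"
  have d: "int d = \<delta> S" using S_max[of "{}"] by (simp add: d_def \<delta>_def)
  have "\<forall>T\<subseteq>X. card T \<le> card (\<Union>(N ` T)) + d"
  proof (intro allI impI)
    fix T assume "T \<subseteq> X"
    then have "\<delta> T \<le> int d" using S_max d by simp
    then show "card T \<le> card (\<Union>(N ` T)) + d" unfolding \<delta>_def by linarith
  qed
  then obtain D f where "D \<subseteq> X" "inj_on f D" "\<forall>x\<in>D. f x \<in> N x" "card X \<le> card D + d"
    using hall_marriage_with_defect[OF assms] by blast
  moreover have "card X + card (\<Union>(N ` S)) \<le> card D + card S"
    using \<open>card X \<le> card D + d\<close> d unfolding \<delta>_def by linarith
  ultimately show ?thesis using that S(1) by blast
qed

lemma simple_graph_finite_edges: "simple_graph V E \<Longrightarrow> finite E"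
proof -
  assume "simple_graph V E"
  then have "finite V" "E \<subseteq> Pow V" by (auto simp: simple_graph_def)
  then show "finite E" by (meson finite_Pow_iff finite_subset)
qed

lemma tau_le_card_vertex_cover:
  assumes "finite V" "vertex_cover V E C"
  shows "tau V E \<le> card C"
proof -
  have "card ` {C. vertex_cover V E C} \<subseteq> {..card V}"
    using assms(1) by (auto simp: vertex_cover_def card_mono)
  then have "finite (card ` {C. vertex_cover V E C})" by (rule finite_subset) simp
  then show ?thesis unfolding tau_def using assms(2) by (simp add: Min_le)
qed

lemma card_Union_edges_le:
  assumes "\<forall>e\<in>M. card e = 2"
  shows "card (\<Union>M) \<le> 2 * card M"
proof -
  have "card (\<Union>M) \<le> sum card M" by (rule card_Union_le_sum_card)
  also have "\<dots> = 2 * card M" using assms by simp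
  finally show ?thesis .
qed

lemma ex_maximal_matching:
  assumes "finite F"
  shows "\<exists>M\<subseteq>F. pairwise disjnt M \<and> (\<forall>e\<in>F. e \<noteq> {} \<longrightarrow> e \<inter> \<Union>M \<noteq> {})"
  using assms
proof (induction F rule: finite_induct)
  case (insert e F)
  then obtain M where M: "M \<subseteq> F" "pairwise disjnt M" "\<forall>e\<in>F. e \<noteq> {} \<longrightarrow> e \<inter> \<Union>M \<noteq> {}"
    by blast
  show ?case
  proof (cases "e \<inter> \<Union>M = {}")
    case True
    have "pairwise disjnt (insert e M)"
      using M(2) True unfolding pairwise_insert by (auto simp: disjnt_def)
    moreover have "insert e M \<subseteq> insert e F" using M(1) by (rule insert_mono)
    moreover have "\<forall>e'\<in>insert e F. e' \<noteq> {} \<longrightarrow> e' \<inter> \<Union>(insert e M) \<noteq> {}"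
      using M(3) by blast
    ultimately show ?thesis by blast
  next
    case False
    then show ?thesis using M by (intro exI[of _ M]) (simp add: subset_insertI2)
  qed
qed simp

definition pair_avoiding_matching ::
    "'a set set \<Rightarrow> 'i set \<Rightarrow> ('i \<Rightarrow> 'a) \<Rightarrow> ('i \<Rightarrow> 'a) \<Rightarrow> ('i \<Rightarrow> 'a set) \<Rightarrow> bool" where
  "pair_avoiding_matching E I x y m \<longleftrightarrow>
     (\<forall>i\<in>I. m i \<in> E)
   \<and> (\<forall>i\<in>I. \<forall>j\<in>I. i \<noteq> j \<longrightarrow> m i \<inter> m j = {})
   \<and> (\<forall>i\<in>I. \<forall>j\<in>I. i \<noteq> j \<longrightarrow> m i \<inter> {x j, y j} = {})"

locale terminal_pairs =
  fixes V :: "'a set" and E :: "'a set set" and I :: "'i set" and x y :: "'i \<Rightarrow> 'a"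
  assumes simple: "simple_graph V E" and finite_I: "finite I"
    and terminals_in_V: "x ` I \<subseteq> V" "y ` I \<subseteq> V"
    and inj_x: "inj_on x I" and inj_y: "inj_on y I"
    and x_neq_y: "\<forall>i\<in>I. \<forall>j\<in>I. x i \<noteq> y j"
    and terminals_independent: "independent_set E (x ` I \<union> y ` I)"
begin

abbreviation terminals :: "'a set" where
  "terminals \<equiv> x ` I \<union> y ` I"

lemma finite_V: "finite V"
  and edge_subset: "e \<in> E \<Longrightarrow> e \<subseteq> V"
  and card_edge: "e \<in> E \<Longrightarrow> card e = 2"
  using simple by (auto simp: simple_graph_def)

lemma terminal_pairs_disjoint:
  "i \<in> I \<Longrightarrow> j \<in> I \<Longrightarrow> i \<noteq> j \<Longrightarrow> {x i, y i} \<inter> {x j, y j} = {}"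
  using inj_x inj_y x_neq_y by (auto dest: inj_onD)

lemma edge_leaving_terminals:
  assumes "e \<in> E" "e \<inter> terminals \<noteq> {}"
  obtains a b where "e = {a, b}" "a \<in> terminals" "b \<in> V - terminals"
proof -
  obtain a b where ab: "e = {a, b}" using card_edge[OF assms(1)] by (meson card_2_iff)
  have "\<not> e \<subseteq> terminals" using terminals_independent assms(1) by (simp add: independent_set_def)
  then consider "a \<in> terminals" "b \<notin> terminals" | "b \<in> terminals" "a \<notin> terminals"
    using assms(2) ab by auto
  moreover have "a \<in> V" "b \<in> V" using edge_subset[OF assms(1)] ab by auto
  ultimately show ?thesis using that ab by (cases; metis Diff_iff insert_commute)
qed

lemma pair_avoiding_matchingI:
  assumes "\<forall>i\<in>I. m i \<in> E" "\<forall>i\<in>I. m i \<inter> terminals \<subseteq> {x i, y i}"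
    and "\<forall>i\<in>I. \<forall>j\<in>I. i \<noteq> j \<longrightarrow> (m i - terminals) \<inter> (m j - terminals) = {}"
  shows "pair_avoiding_matching E I x y m"
proof -
  have avoid: "m i \<inter> {x j, y j} = {}" if "i \<in> I" "j \<in> I" "i \<noteq> j" for i j
  proof -
    have "m i \<inter> {x j, y j} \<subseteq> m i \<inter> terminals" using that(2) by auto
    also have "\<dots> \<subseteq> {x i, y i}" using assms(2) that(1) by simp
    finally show ?thesis using terminal_pairs_disjoint[OF that] by auto
  qed
  have "m i \<inter> m j = {}" if "i \<in> I" "j \<in> I" "i \<noteq> j" for i j
  proof -
    have "m i \<inter> m j \<subseteq> (m i \<inter> {x j, y j}) \<union> ((m i - terminals) \<inter> (m j - terminals))"
      using assms(2) that(2) by auto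
    then show ?thesis using avoid[OF that] assms(3) that by auto
  qed
  then show ?thesis using assms(1) avoid by (simp add: pair_avoiding_matching_def)
qed

end

locale terminal_pairs_matching = terminal_pairs V E I x y
  for V :: "'a set" and E and I :: "'i set" and x y +
  fixes M :: "'a set set"
  assumes M_edges: "M \<subseteq> E" and M_matching: "pairwise disjnt M"
    and M_avoids_terminals: "\<forall>e\<in>M. e \<inter> terminals = {}"
    and M_maximal: "\<forall>e\<in>E. e \<inter> terminals = {} \<longrightarrow> e \<inter> \<Union>M \<noteq> {}"
begin

definition free_vertices :: "'a set" where
  "free_vertices = V - terminals - \<Union>M"

definition free_neighbours :: "'i \<Rightarrow> 'a set" where
  "free_neighbours j = {w \<in> free_vertices. {x j, w} \<in> E \<or> {y j, w} \<in> E}"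

lemma finite_M: "finite M"
  using M_edges simple_graph_finite_edges[OF simple] by (rule finite_subset)

lemma matching_edges_disjoint: "e \<in> M \<Longrightarrow> e' \<in> M \<Longrightarrow> e \<noteq> e' \<Longrightarrow> e \<inter> e' = {}"
  using M_matching by (auto simp: pairwise_def disjnt_def)

lemma vertex_cover_of_subset:
  assumes "S \<subseteq> I"
  shows "vertex_cover V E (\<Union>M \<union> \<Union>(free_neighbours ` S) \<union> x ` (I - S) \<union> y ` (I - S))"
    (is "vertex_cover V E ?C")
  unfolding vertex_cover_def
proof
  show "?C \<subseteq> V"
    using M_edges edge_subset terminals_in_V by (auto simp: free_neighbours_def free_vertices_def)
  show "\<forall>e\<in>E. e \<inter> ?C \<noteq> {}"
  proof
    fix e assume e: "e \<in> E"
    show "e \<inter> ?C \<noteq> {}"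
    proof (cases "e \<inter> terminals = {} \<or> e \<inter> \<Union>M \<noteq> {}")
      case True
      then have "e \<inter> \<Union>M \<noteq> {}" using M_maximal e by auto
      then show ?thesis by auto
    next
      case False
      then obtain a b where ab: "e = {a, b}" "a \<in> terminals" "b \<in> V - terminals"
        using edge_leaving_terminals[OF e] by blast
      then have "b \<in> free_vertices" using False by (auto simp: free_vertices_def)
      obtain j where j: "j \<in> I" "a = x j \<or> a = y j" using ab(2) by blast
      show ?thesis
      proof (cases "j \<in> S")
        case True
        then have "b \<in> \<Union>(free_neighbours ` S)"
          using \<open>b \<in> free_vertices\<close> ab(1) e j(2) by (auto simp: free_neighbours_def)
        then show ?thesis using ab(1) by blast
      next
        case False
        then show ?thesis using ab(1) j by blast
      qed
    qed
  qed
qed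

lemma tau_le_cover_of_subset:
  assumes "S \<subseteq> I"
  shows "tau V E + 2 * card S \<le> 2 * card M + card (\<Union>(free_neighbours ` S)) + 2 * card I"
proof -
  have card_I_S: "card S + card (I - S) = card I"
    using assms finite_I by (metis card_Diff_subset finite_subset le_add_diff_inverse card_mono)
  have "tau V E \<le> card (\<Union>M \<union> \<Union>(free_neighbours ` S) \<union> x ` (I - S) \<union> y ` (I - S))"
    by (rule tau_le_card_vertex_cover[OF finite_V vertex_cover_of_subset[OF assms]])
  also have "\<dots> \<le> card (\<Union>M) + card (\<Union>(free_neighbours ` S)) + card (x ` (I - S)) + card (y ` (I - S))"
    by (meson add_le_mono card_Un_le le_refl order_trans)
  also have "\<dots> \<le> 2 * card M + card (\<Union>(free_neighbours ` S)) + 2 * card (I - S)"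
  proof -
    have "card (\<Union>M) \<le> 2 * card M"
      using M_edges card_edge by (intro card_Union_edges_le) blast
    moreover have "card (x ` (I - S)) \<le> card (I - S)" "card (y ` (I - S)) \<le> card (I - S)"
      using finite_I by (simp_all add: card_image_le)
    ultimately show ?thesis by linarith
  qed
  finally show ?thesis using card_I_S by linarith
qed

lemma pair_avoiding_matching_from_representatives:
  assumes "D \<subseteq> I" "inj_on g D" "\<forall>j\<in>D. g j \<in> free_neighbours j" "card (I - D) \<le> card M"
  shows "\<exists>m. pair_avoiding_matching E I x y m"
proof -
  obtain h where h: "inj_on h (I - D)" "h ` (I - D) \<subseteq> M"
    using card_le_inj[OF _ finite_M assms(4)] finite_I by blast
  define v where "v j = (if {x j, g j} \<in> E then x j else y j)" for j
  define m where "m j = (if j \<in> D then {v j, g j} else h j)" for j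
  have g_free: "g j \<in> free_vertices" if "j \<in> D" for j
    using assms(3) that by (simp add: free_neighbours_def)
  have m_edge: "m j \<in> E" if "j \<in> I" for j
    using that assms(3) h(2) M_edges by (auto simp: m_def v_def free_neighbours_def)
  have m_parts: "m j \<inter> terminals \<subseteq> {x j, y j} \<and> m j - terminals = (if j \<in> D then {g j} else h j)"
    if "j \<in> I" for j
  proof (cases "j \<in> D")
    case True
    then show ?thesis using g_free[OF True] that by (auto simp: m_def v_def free_vertices_def)
  next
    case False
    then have "h j \<in> M" using h(2) that by blast
    then show ?thesis using M_avoids_terminals False by (auto simp: m_def)
  qed
  have outside_disjoint: "(m i - terminals) \<inter> (m j - terminals) = {}" if ij: "i \<in> I" "j \<in> I" "i \<noteq> j" for i j
  proof -
    have g_notin_h: "g i' \<notin> h j'" if "i' \<in> D" "j' \<in> I - D" for i' j'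
      using g_free[OF that(1)] h(2) that(2) by (auto simp: free_vertices_def)
    have "g i \<noteq> g j" if "i \<in> D" "j \<in> D" using assms(2) that ij(3) by (meson inj_onD)
    moreover have "h i \<inter> h j = {}" if "i \<notin> D" "j \<notin> D"
      using h that ij by (intro matching_edges_disjoint) (auto dest: inj_onD)
    ultimately show ?thesis
      using m_parts[OF ij(1)] m_parts[OF ij(2)] g_notin_h[of i j] g_notin_h[of j i] ij(1,2)
      by (auto simp: disjoint_iff)
  qed
  have "pair_avoiding_matching E I x y m"
    using m_edge m_parts outside_disjoint by (intro pair_avoiding_matchingI) auto
  then show ?thesis by blast
qed

lemma pair_avoiding_matching_if_tau_large:
  assumes "2 * card I \<le> tau V E + 1"
  shows "\<exists>m. pair_avoiding_matching E I x y m"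
proof -
  have "\<forall>j\<in>I. finite (free_neighbours j)"
    using finite_V by (simp add: free_neighbours_def free_vertices_def)
  then obtain S D g where S: "S \<subseteq> I" and D: "D \<subseteq> I" "inj_on g D" "\<forall>j\<in>D. g j \<in> free_neighbours j"
    and deficiency: "card I + card (\<Union>(free_neighbours ` S)) \<le> card D + card S"
    using hall_deficiency[OF finite_I] by metis
  have "card S \<le> card I" using S finite_I by (rule card_mono[rotated])
  moreover have "card (I - D) = card I - card D" using D(1) finite_I by (meson card_Diff_subset finite_subset)
  ultimately have "card (I - D) \<le> card M"
    using tau_le_cover_of_subset[OF S] deficiency assms by linarith
  then show ?thesis by (rule pair_avoiding_matching_from_representatives[OF D])
qed

end

context terminal_pairs
begin

theorem ex_pair_avoiding_matching:
  assumes "2 * card I \<le> tau V E + 1"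
  shows "\<exists>m. pair_avoiding_matching E I x y m"
proof -
  define F where "F = {e \<in> E. e \<inter> terminals = {}}"
  have "finite F" using simple_graph_finite_edges[OF simple] by (simp add: F_def)
  obtain M where M: "M \<subseteq> F" "pairwise disjnt M" "\<forall>e\<in>F. e \<noteq> {} \<longrightarrow> e \<inter> \<Union>M \<noteq> {}"
    using ex_maximal_matching[OF \<open>finite F\<close>] by (elim exE conjE) (rule that; assumption)
  have "M \<subseteq> E" "\<forall>e\<in>M. e \<inter> terminals = {}" using M(1) by (auto simp: F_def)
  moreover have "\<forall>e\<in>E. e \<inter> terminals = {} \<longrightarrow> e \<inter> \<Union>M \<noteq> {}"
  proof (intro ballI impI)
    fix e assume "e \<in> E" "e \<inter> terminals = {}"
    moreover have "e \<noteq> {}" using card_edge[OF \<open>e \<in> E\<close>] by auto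
    ultimately show "e \<inter> \<Union>M \<noteq> {}" using M(3) by (simp add: F_def)
  qed
  ultimately interpret terminal_pairs_matching V E I x y M
    using M(2) by unfold_locales
  show ?thesis by (rule pair_avoiding_matching_if_tau_large[OF assms])
qed

end

theorem mainTheorem14:
  fixes V :: "'a set" and E :: "'a set set" and k :: nat and x y :: "nat \<Rightarrow> 'a"
  assumes "simple_graph V E"
    and "k \<ge> 1"
    and "\<forall>i\<in>{1..k}. x i \<in> V \<and> y i \<in> V"
    and "inj_on x {1..k}" and "inj_on y {1..k}"
    and "\<forall>i\<in>{1..k}. \<forall>j\<in>{1..k}. x i \<noteq> y j"
    and "independent_set E (x ` {1..k} \<union> y ` {1..k})"
    and "tau V E \<ge> 2 * k - 1"
  shows "\<exists>m :: nat \<Rightarrow> 'a set.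
           (\<forall>i\<in>{1..k}. m i \<in> E)
         \<and> (\<forall>i\<in>{1..k}. \<forall>j\<in>{1..k}. i \<noteq> j \<longrightarrow> m i \<inter> m j = {})
         \<and> (\<forall>i\<in>{1..k}. \<forall>j\<in>{1..k}. i \<noteq> j \<longrightarrow> m i \<inter> {x j, y j} = {})"
proof -
  interpret terminal_pairs V E "{1..k}" x y
    using assms(1,3-7) by unfold_locales auto
  have "2 * card {1..k} \<le> tau V E + 1" using assms(2,8) by simp
  then show ?thesis using ex_pair_avoiding_matching unfolding pair_avoiding_matching_def by blast
qed

end
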